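(* Let $m>n>0$ be integers, and let $a,b,x$ be real numbers with $|x|<m^m/(n^n(m-n)^{m-n})$. Set $$S_{m,n}(a,b,x)=\sum_{k=1}^\infty(ak+b)\frac{x^k}{\binom{mk}{nk}}.$$ Then $$S_{m,n}(a,b,x)=n\int_0^1T_{m,n}(a,b,x;t)\,dt,$$ where $$T_{m,n}(a,b,x;t)=t^{n-1}(1-t)^{m-n}x\,\frac{(a-b)t^n(1-t)^{m-n}x+a+b}{(1-t^n(1-t)^{m-n}x)^3}.$$ *)

theory Defs
  imports "HOL-Analysis.Analysis"
begin

definition T_mn :: "nat \<Rightarrow> nat \<Rightarrow> real \<Rightarrow> real \<Rightarrow> real \<Rightarrow> real \<Rightarrow> real" where
  "T_mn m n a b x t =
     t ^ (n - 1) * (1 - t) ^ (m - n) * x *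
     (((a - b) * t ^ n * (1 - t) ^ (m - n) * x + a + b) /
      (1 - t ^ n * (1 - t) ^ (m - n) * x) ^ 3)"

end

theory Submission
  imports Defs
begin

text \<open>Euler's Beta integral gives \<open>1 / binom(mk, nk) = nk \<integral>\<^sub>0\<^sup>1 t\<^bsup>nk-1\<^esup> (1-t)\<^bsup>(m-n)k\<^esup> dt\<close>,
  so the \<open>k\<close>-th term of the series is \<open>n\<close> times the integral of \<open>k(ak+b) v(t) u(t)\<^bsup>k-1\<^esup>\<close>
  with \<open>u = t\<^sup>n(1-t)\<^bsup>m-n\<^esup>x\<close> and \<open>v = t\<^bsup>n-1\<^esup>(1-t)\<^bsup>m-n\<^esup>x\<close>. Since \<open>t\<^sup>n(1-t)\<^bsup>m-n\<^esup>\<close>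
  attains its maximum \<open>n\<^sup>n(m-n)\<^bsup>m-n\<^esup>/m\<^sup>m\<close> on \<open>[0,1]\<close>, the hypothesis on \<open>x\<close> bounds \<open>|u|\<close>
  uniformly by some \<open>r < 1\<close>, so summation and integration may be interchanged, and summing
  the once and twice differentiated geometric series in \<open>u\<close> gives \<open>T\<^sub>m\<^sub>,\<^sub>n\<close>.\<close>

lemma geometric_second_deriv_sums:
  fixes z :: "'a :: {real_normed_field,banach}"
  assumes "norm z < 1"
  shows "(\<lambda>k. of_nat (Suc k * Suc (Suc k)) * z ^ k) sums (2 / (1 - z) ^ 3)"
proof -
  have "(\<lambda>k. diffs (\<lambda>k. of_nat (Suc k)) k * z ^ k) sums (2 / (1 - z) ^ 3)"
  proof (rule termdiffs_sums_strong[OF geometric_deriv_sums _ assms])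
    have "1 - z \<noteq> 0"
      using assms by auto
    then show "((\<lambda>z. 1 / (1 - z) ^ 2) has_field_derivative 2 / (1 - z) ^ 3) (at z)"
      by (auto intro!: derivative_eq_intros simp: divide_simps power2_eq_square power3_eq_cube)
  qed
  then show ?thesis
    by (simp only: diffs_def of_nat_mult mult.assoc)
qed

lemma sums_Suc_affine_power:
  fixes z a b :: "'a :: {real_normed_field,banach}"
  assumes "norm z < 1"
  shows "(\<lambda>k. of_nat (Suc k) * (a * of_nat (Suc k) + b) * z ^ k)
           sums (((a - b) * z + a + b) / (1 - z) ^ 3)"
proof -
  have "1 - z \<noteq> 0"
    using assms by auto
  have "(\<lambda>k. a * (of_nat (Suc k * Suc (Suc k)) * z ^ k) + (b - a) * (of_nat (Suc k) * z ^ k))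
          sums (a * (2 / (1 - z) ^ 3) + (b - a) * (1 / (1 - z) ^ 2))"
    using assms by (intro sums_add sums_mult geometric_second_deriv_sums geometric_deriv_sums)
  also have "a * (2 / (1 - z) ^ 3) + (b - a) * (1 / (1 - z) ^ 2) = ((a - b) * z + a + b) / (1 - z) ^ 3"
    using \<open>1 - z \<noteq> 0\<close> by (simp add: divide_simps) algebra
  finally show ?thesis
    by (simp add: algebra_simps)
qed

lemma has_integral_Beta_nat:
  assumes "0 < p"
  shows "((\<lambda>t::real. t ^ (p - 1) * (1 - t) ^ q)
           has_integral fact (p - 1) * fact q / fact (p + q)) {0..1}"
proof -
  have "Beta (real p) (real q + 1) = fact (p - 1) * fact q / fact (p + q)"
    using assms Gamma_fact[of "p - 1", where 'a=real] Gamma_fact[of q, where 'a=real]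
      Gamma_fact[of "p + q", where 'a=real]
    by (simp add: Beta_def add_ac)
  then have "((\<lambda>t. t powr (real p - 1) * (1 - t) powr (real q + 1 - 1))
               has_integral fact (p - 1) * fact q / fact (p + q)) {0..1}"
    using has_integral_Beta_real[of "real p" "real q + 1"] assms by simp
  then show ?thesis
  proof (rule has_integral_spike_finite[of "{0, 1}", rotated 2])
    fix t :: real
    assume "t \<in> {0..1} - {0, 1}"
    then show "t ^ (p - 1) * (1 - t) ^ q = t powr (real p - 1) * (1 - t) powr (real q + 1 - 1)"
      using assms by (simp add: powr_realpow[symmetric])
  qed simp
qed

lemma inverse_binomial_has_integral:
  assumes "0 < p" "p \<le> N"
  shows "((\<lambda>t::real. real p * t ^ (p - 1) * (1 - t) ^ (N - p))
           has_integral 1 / real (N choose p)) {0..1}"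
proof -
  have "real p * (fact (p - 1) * fact (N - p) / fact N) = fact p * fact (N - p) / fact N"
    using fact_reduce[OF \<open>0 < p\<close>, where 'a=real] by simp
  also have "\<dots> = 1 / real (N choose p)"
    using binomial_fact[OF \<open>p \<le> N\<close>, where 'a=real] by simp
  finally have "real p * (fact (p - 1) * fact (N - p) / fact N) = 1 / real (N choose p)" .
  with has_integral_mult_right[OF has_integral_Beta_nat[OF \<open>0 < p\<close>, of "N - p"], of "real p"]
  show ?thesis
    using \<open>p \<le> N\<close> by (simp add: mult.assoc)
qed

lemma power_mult_one_minus_power_le:
  fixes t :: real
  assumes "0 < p" "0 < q" "0 \<le> t" "t \<le> 1"
  shows "t ^ p * (1 - t) ^ q * real (p + q) ^ (p + q) \<le> real p ^ p * real q ^ q"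
proof -
  \<comment> \<open>weighted AM-GM, from \<open>y \<le> exp (y - 1)\<close> applied to \<open>tm/p\<close> and \<open>(1-t)m/q\<close>\<close>
  have power_le_exp: "y ^ k \<le> exp (real k * (y - 1))" if "0 \<le> y" for y :: real and k
  proof -
    have "y ^ k \<le> exp (y - 1) ^ k"
      using that exp_ge_add_one_self[of "y - 1"] by (intro power_mono) auto
    then show ?thesis
      by (simp add: exp_of_nat_mult)
  qed
  define m where "m = real (p + q)"
  have "(t * m / p) ^ p * ((1 - t) * m / q) ^ q
          \<le> exp (real p * (t * m / p - 1)) * exp (real q * ((1 - t) * m / q - 1))"
    using assms by (intro mult_mono power_le_exp) (auto simp: m_def)
  also have "\<dots> = 1"
    using assms by (simp add: m_def field_simps flip: exp_add)
  finally have "(t * m / p) ^ p * ((1 - t) * m / q) ^ q \<le> 1" .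
  moreover have "t ^ p * (1 - t) ^ q * m ^ (p + q)
                   = (t * m / p) ^ p * ((1 - t) * m / q) ^ q * (real p ^ p * real q ^ q)"
    using assms by (simp add: power_add power_mult_distrib power_divide)
  ultimately show ?thesis
    using assms by (simp add: m_def mult_left_le_one_le)
qed

lemma sums_integral_Weierstrass:
  fixes f :: "nat \<Rightarrow> 'a::ordered_euclidean_space \<Rightarrow> 'b::banach"
  assumes cont: "\<And>k. continuous_on {a..b} (f k)"
    and bound: "\<And>k t. t \<in> {a..b} \<Longrightarrow> norm (f k t) \<le> M k" and "summable M"
    and sums: "\<And>t. t \<in> {a..b} \<Longrightarrow> (\<lambda>k. f k t) sums g t"
  shows "(\<lambda>k. integral {a..b} (f k)) sums integral {a..b} g"
proof -
  have "uniform_limit {a..b} (\<lambda>N t. \<Sum>k<N. f k t) (\<lambda>t. \<Sum>k. f k t) sequentially"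
    using bound \<open>summable M\<close> by (rule Weierstrass_m_test)
  moreover have "continuous_on {a..b} (\<lambda>t. \<Sum>k<N. f k t)" for N
    using cont by (intro continuous_on_sum)
  ultimately obtain I J where I: "\<And>N. ((\<lambda>t. \<Sum>k<N. f k t) has_integral I N) {a..b}"
    and J: "((\<lambda>t. \<Sum>k. f k t) has_integral J) {a..b}" and "I \<longlonglongrightarrow> J"
    by (rule uniform_limit_integral) (blast | simp)+
  have "((\<lambda>t. \<Sum>k<N. f k t) has_integral (\<Sum>k<N. integral {a..b} (f k))) {a..b}" for N
    using cont
    by (intro has_integral_sum finite_lessThan integrable_integral integrable_continuous_interval)
  then have "I = (\<lambda>N. \<Sum>k<N. integral {a..b} (f k))"
    using I has_integral_unique by blast
  moreover have "(g has_integral J) {a..b}"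
    using J by (rule has_integral_eq[rotated]) (metis sums sums_unique)
  ultimately show ?thesis
    using \<open>I \<longlonglongrightarrow> J\<close> by (simp add: sums_def integral_unique)
qed

definition T_mn_term :: "nat \<Rightarrow> nat \<Rightarrow> real \<Rightarrow> real \<Rightarrow> real \<Rightarrow> nat \<Rightarrow> real \<Rightarrow> real" where
  "T_mn_term m n a b x k t =
     real (Suc k) * (a * real (Suc k) + b) * (t ^ (n - 1) * (1 - t) ^ (m - n) * x) *
     (t ^ n * (1 - t) ^ (m - n) * x) ^ k"

lemma sums_T_mn_term:
  assumes "\<bar>t ^ n * (1 - t) ^ (m - n) * x\<bar> < 1"
  shows "(\<lambda>k. T_mn_term m n a b x k t) sums T_mn m n a b x t"
  using sums_mult[OF sums_Suc_affine_power[of "t ^ n * (1 - t) ^ (m - n) * x" a b],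
      of "t ^ (n - 1) * (1 - t) ^ (m - n) * x"] assms
  by (simp add: T_mn_term_def T_mn_def mult_ac)

lemma has_integral_T_mn_term:
  assumes "0 < n" "n \<le> m"
  shows "(T_mn_term m n a b x k has_integral
           (a * real (Suc k) + b) * x ^ Suc k / (real n * real (m * Suc k choose (n * Suc k)))) {0..1}"
proof -
  define p where "p = n * Suc k"
  have p: "0 < p" "p \<le> m * Suc k"
    using assms unfolding p_def by (simp, intro mult_le_mono1)
  have kernel: "t ^ (p - 1) * (1 - t) ^ (m * Suc k - p)
                  = t ^ (n - 1) * (1 - t) ^ (m - n) * (t ^ n * (1 - t) ^ (m - n)) ^ k" for t :: real
  proof -
    have "p - 1 = (n - 1) + n * k" "m * Suc k - p = (m - n) + (m - n) * k"
      using assms by (simp_all add: p_def diff_mult_distrib)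
    then show ?thesis
      by (simp add: power_add power_mult power_mult_distrib)
  qed
  define C where "C = (a * real (Suc k) + b) * x ^ Suc k"
  have integrand: "T_mn_term m n a b x k
                    = (\<lambda>t. C / real n * (real p * t ^ (p - 1) * (1 - t) ^ (m * Suc k - p)))"
    unfolding mult.assoc[of "real p"] kernel T_mn_term_def C_def
    using assms by (intro ext) (simp add: p_def field_simps)
  have "((\<lambda>t. C / real n * (real p * t ^ (p - 1) * (1 - t) ^ (m * Suc k - p)))
          has_integral C / real n * (1 / real (m * Suc k choose p))) {0..1}"
    by (intro has_integral_mult_right inverse_binomial_has_integral p)
  then show ?thesis
    by (simp add: integrand C_def p_def)
qed

lemma abs_T_mn_term_le:
  assumes "0 \<le> t" "t \<le> 1" "\<bar>t ^ n * (1 - t) ^ (m - n) * x\<bar> \<le> r"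
  shows "\<bar>T_mn_term m n a b x k t\<bar> \<le> \<bar>x\<bar> * (\<bar>a\<bar> + \<bar>b\<bar>) * (real (Suc k * Suc (Suc k)) * r ^ k)"
proof -
  have "\<bar>a * real (Suc k) + b\<bar> \<le> \<bar>a\<bar> * real (Suc k) + \<bar>b\<bar>"
    by (simp add: abs_mult order_trans[OF abs_triangle_ineq])
  also have "\<dots> \<le> real (Suc (Suc k)) * (\<bar>a\<bar> + \<bar>b\<bar>)"
    by (simp add: algebra_simps)
  finally have "real (Suc k) * \<bar>a * real (Suc k) + b\<bar>
                 \<le> real (Suc k) * (real (Suc (Suc k)) * (\<bar>a\<bar> + \<bar>b\<bar>))"
    by (rule mult_left_mono) simp
  then have coeff: "\<bar>real (Suc k) * (a * real (Suc k) + b)\<bar>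
                      \<le> real (Suc k * Suc (Suc k)) * (\<bar>a\<bar> + \<bar>b\<bar>)"
    by (simp only: abs_mult abs_of_nat of_nat_mult mult.assoc)
  have weight: "\<bar>t ^ (n - 1) * (1 - t) ^ (m - n) * x\<bar> \<le> \<bar>x\<bar>"
    using assms by (simp add: abs_mult mult_le_one power_le_one mult_left_le_one_le)
  have geometric: "\<bar>(t ^ n * (1 - t) ^ (m - n) * x) ^ k\<bar> \<le> r ^ k"
    using assms by (simp add: power_abs power_mono)
  have "\<bar>T_mn_term m n a b x k t\<bar>
          = \<bar>real (Suc k) * (a * real (Suc k) + b)\<bar> * \<bar>t ^ (n - 1) * (1 - t) ^ (m - n) * x\<bar>
            * \<bar>(t ^ n * (1 - t) ^ (m - n) * x) ^ k\<bar>"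
    unfolding T_mn_term_def by (simp only: abs_mult)
  also have "\<dots> \<le> real (Suc k * Suc (Suc k)) * (\<bar>a\<bar> + \<bar>b\<bar>) * \<bar>x\<bar> * r ^ k"
    using coeff weight geometric by (intro mult_mono) auto
  finally show ?thesis
    by (simp only: mult_ac)
qed

theorem proposition2p1:
  fixes m n :: nat and a b x :: real
  assumes "0 < n" and "n < m"
    and "\<bar>x\<bar> < real m ^ m / (real n ^ n * real (m - n) ^ (m - n))"
  shows "(\<lambda>k. (a * real (Suc k) + b) * x ^ Suc k / real (m * Suc k choose (n * Suc k)))
           sums (real n * integral {0..1} (T_mn m n a b x))"
proof -
  define r where "r = \<bar>x\<bar> * (real n ^ n * real (m - n) ^ (m - n)) / real m ^ m"
  have "0 \<le> r" "r < 1"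
    using assms by (simp_all add: r_def field_simps)
  have u_le: "\<bar>t ^ n * (1 - t) ^ (m - n) * x\<bar> \<le> r" if "0 \<le> t" "t \<le> 1" for t
  proof -
    have "t ^ n * (1 - t) ^ (m - n) * real m ^ m \<le> real n ^ n * real (m - n) ^ (m - n)"
      using power_mult_one_minus_power_le[of n "m - n" t] assms that by simp
    then show ?thesis
      using that assms by (simp add: r_def abs_mult field_simps mult_left_mono)
  qed
  have "(\<lambda>k. integral {0..1} (T_mn_term m n a b x k)) sums integral {0..1} (T_mn m n a b x)"
  proof (rule sums_integral_Weierstrass)
    show "continuous_on {0..1} (T_mn_term m n a b x k)" for k
      unfolding T_mn_term_def by (intro continuous_intros)
    show "norm (T_mn_term m n a b x k t)
            \<le> \<bar>x\<bar> * (\<bar>a\<bar> + \<bar>b\<bar>) * (real (Suc k * Suc (Suc k)) * r ^ k)" if "t \<in> {0..1}" for k t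
      unfolding real_norm_def using that by (intro abs_T_mn_term_le u_le) auto
    show "summable (\<lambda>k. \<bar>x\<bar> * (\<bar>a\<bar> + \<bar>b\<bar>) * (real (Suc k * Suc (Suc k)) * r ^ k))"
      using geometric_second_deriv_sums[of r] \<open>0 \<le> r\<close> \<open>r < 1\<close>
      by (intro summable_mult) (simp add: sums_iff)
    show "(\<lambda>k. T_mn_term m n a b x k t) sums T_mn m n a b x t" if "t \<in> {0..1}" for t
      using that u_le \<open>r < 1\<close> by (intro sums_T_mn_term) force
  qed
  then have "(\<lambda>k. real n * integral {0..1} (T_mn_term m n a b x k))
               sums (real n * integral {0..1} (T_mn m n a b x))"
    by (rule sums_mult)
  moreover have "real n * integral {0..1} (T_mn_term m n a b x k)
                   = (a * real (Suc k) + b) * x ^ Suc k / real (m * Suc k choose (n * Suc k))" for k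
    using assms by (simp add: integral_unique[OF has_integral_T_mn_term])
  ultimately show ?thesis
    by simp
qed

end
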